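(* Let $f:\mathbb{R}^n_{>0}\to\mathbb{R}^n_{>0}$ be order-preserving and homogeneous. If $\mathcal{G}(f)$ has a unique final class $C$ and $r(f^{[n]\setminus C}_0)<r(f)$, then the eigenspace $E(f)$ is nonempty and bounded in $(\mathbb{R}^n_{>0},d_H)$.
   Context: $[n]=\{1,\dots,n\}$; entrywise order. Order-preserving: $x\le y\Rightarrow f(x)\le f(y)$; homogeneous: $f(tx)=tf(x)$ for $t>0$. $d_H(x,y)=\log\max_{i,j}\frac{y_ix_j}{x_iy_j}$ on $\mathbb{R}^n_{>0}$; $E(f)$ is the set of $x\in\mathbb{R}^n_{>0}$ with $f(x)=\mu x$ for some $\mu$. $f$ extends continuously to an order-preserving homogeneous map on $\mathbb{R}^n_{\ge0}$, also denoted $f$. $P^J_0(x)_j=x_j$ for $j\in J$ and $0$ otherwise; $f^J_0=P^J_0fP^J_0$. For $g$ order-preserving homogeneous on $\mathbb{R}^n_{\ge 0}$, $r(g)=\inf_{x\in\mathbb{R}^n_{>0}}\max_i g(x)_i/x_i$ (and $r(f)$ is defined the same way). $\mathcal{G}(f)$ is the directed graph with vertices $[n]$ and an arc from $i$ to $j$ when $\lim_{t\to\infty}f(\exp(te_{\{j\}}))_i=\infty$, where $e_{\{j\}}$ is the $j$-th standard basis vector and $\exp$ is entrywise. A final class is a strongly connected component of $\mathcal{G}(f)$ with no arcs leaving it. *)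

theory Defs
  imports "HOL-Analysis.Analysis"
begin

text \<open>Vectors in R^n are modelled as real^'n for a finite index type 'n (so [n] = UNIV).
  All orderings are written out entrywise.\<close>

definition pos_vec :: "real^'n \<Rightarrow> bool" where
  "pos_vec x \<longleftrightarrow> (\<forall>i. 0 < x $ i)"

definition order_preserving_pos :: "(real^'n \<Rightarrow> real^'n) \<Rightarrow> bool" where
  "order_preserving_pos f \<longleftrightarrow>
     (\<forall>x y. pos_vec x \<and> pos_vec y \<and> (\<forall>i. x $ i \<le> y $ i) \<longrightarrow> (\<forall>i. f x $ i \<le> f y $ i))"

definition homogeneous_pos :: "(real^'n \<Rightarrow> real^'n) \<Rightarrow> bool" where
  "homogeneous_pos f \<longleftrightarrow> (\<forall>x t. pos_vec x \<and> 0 < t \<longrightarrow> f (t *\<^sub>R x) = t *\<^sub>R f x)"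

text \<open>The continuous extension of f to the closed cone: for x \<ge> 0,
  f(x) = inf { f(y) : y > x entrywise, y positive } (entrywise infimum).\<close>
definition ext_cone :: "(real^'n \<Rightarrow> real^'n) \<Rightarrow> real^'n \<Rightarrow> real^'n" where
  "ext_cone f x = (\<chi> i. INF y \<in> {y. pos_vec y \<and> (\<forall>k. x $ k < y $ k)}. f y $ i)"

definition proj0 :: "'n set \<Rightarrow> real^'n \<Rightarrow> real^'n" where
  "proj0 J x = (\<chi> j. if j \<in> J then x $ j else 0)"

text \<open>f^J_0 = P^J_0 f P^J_0 (with f extended to the closed cone).\<close>
definition trunc0 :: "(real^'n \<Rightarrow> real^'n) \<Rightarrow> 'n set \<Rightarrow> real^'n \<Rightarrow> real^'n" where
  "trunc0 f J = (\<lambda>x. proj0 J (ext_cone f (proj0 J x)))"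

definition cw_radius :: "(real^'n \<Rightarrow> real^'n) \<Rightarrow> real" where
  "cw_radius g = (INF x \<in> {x. pos_vec x}. Max (range (\<lambda>i. g x $ i / x $ i)))"

definition graph_arc :: "(real^'n \<Rightarrow> real^'n) \<Rightarrow> 'n \<Rightarrow> 'n \<Rightarrow> bool" where
  "graph_arc f i j \<longleftrightarrow>
     filterlim (\<lambda>t. f (\<chi> k. if k = j then exp t else 1) $ i) at_top at_top"

definition final_class :: "(real^'n \<Rightarrow> real^'n) \<Rightarrow> 'n set \<Rightarrow> bool" where
  "final_class f C \<longleftrightarrow>
     C \<noteq> {} \<and>
     (\<forall>i\<in>C. \<forall>j\<in>C. (graph_arc f)\<^sup>*\<^sup>* i j) \<and>
     (\<forall>i\<in>C. \<forall>j. (graph_arc f)\<^sup>*\<^sup>* i j \<and> (graph_arc f)\<^sup>*\<^sup>* j i \<longrightarrow> j \<in> C) \<and>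
     (\<forall>i\<in>C. \<forall>j. graph_arc f i j \<longrightarrow> j \<in> C)"

definition eigenspace_pos :: "(real^'n \<Rightarrow> real^'n) \<Rightarrow> (real^'n) set" where
  "eigenspace_pos f = {x. pos_vec x \<and> (\<exists>\<mu>. f x = \<mu> *\<^sub>R x)}"

definition hilbert_dist :: "real^'n \<Rightarrow> real^'n \<Rightarrow> real" where
  "hilbert_dist x y = ln (Max {(y $ i * x $ j) / (x $ i * y $ j) | i j. True})"

end

theory Submission
  imports Defs
begin

(* Let \<rho> = r(f) and J = [n] - C. Along an arc i \<rightarrow> j of G(f), a sub-eigenvector u
   (f u \<le> L u) normalised by min u = 1 cannot have u_j large while u_i stays bounded;
   since every vertex reaches C, this gives u_c \<le> K min u for all c \<in> C.
   The gap r(f^J_0) < \<rho> yields w > 0 and \<sigma> < \<rho> with f(w)_i \<le> \<sigma> w_i for i \<in> J.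
   For a positive solution of f(u) = \<mu>(u - \<epsilon>1) with \<rho> \<le> \<mu> \<le> L, compare u with
   (max_k u_k/w_k) w: if the maximum is attained in J then it is of order \<epsilon>, otherwise
   it is attained in C. Either way all ratios u_l/u_k are bounded uniformly, as long as \<epsilon>
   is small compared to max u. For \<epsilon> = 0 this bounds E(f) in Hilbert's metric; for
   \<epsilon> > 0 Brouwer's theorem provides such u, and letting \<epsilon> \<rightarrow> 0 in a compact set of
   positive vectors gives an eigenvector. *)

lemma exists_min_index:
  fixes g :: "'n::finite \<Rightarrow> 'a::linorder"
  obtains k where "\<And>l. g k \<le> g l"
proof -
  have "Min (range g) \<in> range g" by (rule Min_in) auto
  then obtain k where "g k = Min (range g)" by (metis rangeE)
  then show ?thesis by (intro that[of k]) simp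
qed

lemma exists_max_index:
  fixes g :: "'n::finite \<Rightarrow> 'a::linorder"
  obtains k where "\<And>l. g l \<le> g k"
proof -
  have "Max (range g) \<in> range g" by (rule Max_in) auto
  then obtain k where "g k = Max (range g)" by (metis rangeE)
  then show ?thesis by (intro that[of k]) simp
qed

lemma pos_vec_scaleR_iff [simp]: "0 < t \<Longrightarrow> pos_vec (t *\<^sub>R x) \<longleftrightarrow> pos_vec x"
  by (simp add: pos_vec_def zero_less_mult_iff)

lemma pos_vec_one [simp]: "pos_vec 1"
  by (simp add: pos_vec_def)

lemma simplex_nth_le_one:
  fixes x :: "real^'n"
  assumes "0 \<le> x" "(\<Sum>i\<in>UNIV. x $ i) = 1"
  shows "x $ k \<le> 1"
  using assms member_le_sum[of k UNIV "\<lambda>i. x $ i"] by (simp add: less_eq_vec_def)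

lemma nth_le_max_ratio:
  fixes u w :: "real^'n"
  assumes u: "pos_vec u" and w: "pos_vec w" and k: "\<And>l. u $ l / w $ l \<le> u $ k / w $ k"
    and a: "\<And>l. w $ l \<le> w $ a" and b: "\<And>l. w $ b \<le> w $ l"
  shows "u $ l \<le> w $ a / w $ b * u $ k"
proof -
  have pos: "0 < u $ k" "0 < w $ l" "0 < w $ k" "0 < w $ b"
    using u w by (simp_all add: pos_vec_def)
  have "u $ l \<le> u $ k / w $ k * w $ l"
    using k[of l] pos by (simp add: divide_le_eq)
  also have "\<dots> \<le> u $ k / w $ b * w $ a"
    using a[of l] b[of k] pos by (intro mult_mono frac_le) auto
  finally show ?thesis
    by (simp add: mult.commute)
qed

lemma ext_cone_nth_lessE:
  assumes "ext_cone f x $ i < a"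
  obtains y where "pos_vec y" "\<And>k. x $ k < y $ k" "f y $ i < a"
proof -
  let ?Y = "{y. pos_vec y \<and> (\<forall>k. x $ k < y $ k)}"
  have "(\<chi> k. \<bar>x $ k\<bar> + 1) \<in> ?Y"
    by (auto simp: pos_vec_def add_nonneg_pos)
  then have "(\<lambda>y. f y $ i) ` ?Y \<noteq> {}"
    by blast
  with assms have "\<exists>s\<in>(\<lambda>y. f y $ i) ` ?Y. s < a"
    unfolding ext_cone_def by (intro cInf_lessD) auto
  then show ?thesis
    using that by blast
qed

lemma exists_normalised_eigenvector_cbox:
  fixes F :: "real^'n \<Rightarrow> real^'n"
  assumes cont: "continuous_on (cbox 0 1) F" and pos: "\<And>x i. x \<in> cbox 0 1 \<Longrightarrow> 0 < F x $ i"
  obtains x where "x \<in> cbox 0 1" "F x = (\<Sum>i\<in>UNIV. F x $ i) *\<^sub>R x"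
proof -
  define N where "N x = inverse (\<Sum>i\<in>UNIV. F x $ i) *\<^sub>R F x" for x
  have sum_pos: "0 < (\<Sum>i\<in>UNIV. F x $ i)" if "x \<in> cbox 0 1" for x
    using pos[OF that] by (intro sum_pos) auto
  have "0 \<in> cbox (0::real^'n) 1"
    by (simp add: mem_box_cart)
  then have "compact (cbox (0::real^'n) 1)" "convex (cbox (0::real^'n) 1)" "cbox (0::real^'n) 1 \<noteq> {}"
    by auto
  moreover have "continuous_on (cbox 0 1) N"
  proof -
    have "(\<Sum>i\<in>UNIV. F x $ i) \<noteq> 0" if "x \<in> cbox 0 1" for x
      using sum_pos[OF that] by simp
    then show ?thesis
      unfolding N_def using cont by (intro continuous_intros) auto
  qed
  moreover have "N \<in> cbox 0 1 \<rightarrow> cbox 0 1"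
  proof
    fix x :: "real^'n" assume x: "x \<in> cbox 0 1"
    have "F x $ i \<le> (\<Sum>i\<in>UNIV. F x $ i)" for i
      using pos[OF x] by (intro member_le_sum) (auto intro: less_imp_le)
    then show "N x \<in> cbox 0 1"
      using pos[OF x] sum_pos[OF x] by (auto simp: mem_box_cart N_def field_simps intro: less_imp_le)
  qed
  ultimately obtain x where x: "x \<in> cbox 0 1" "N x = x"
    by (rule brouwer)
  have "F x = (\<Sum>i\<in>UNIV. F x $ i) *\<^sub>R N x"
    using sum_pos[OF x(1)] by (simp add: N_def)
  with x have "F x = (\<Sum>i\<in>UNIV. F x $ i) *\<^sub>R x"
    by simp
  with x(1) show ?thesis
    by (rule that)
qed

lemma hilbert_dist_le:
  assumes x: "pos_vec x" and y: "pos_vec y"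
    and bound: "\<And>i j. y $ i * x $ j \<le> K * (x $ i * y $ j)"
  shows "hilbert_dist x y \<le> ln K"
proof -
  let ?G = "{(y $ i * x $ j) / (x $ i * y $ j) | i j. True}"
  have G: "?G = (\<lambda>(i, j). (y $ i * x $ j) / (x $ i * y $ j)) ` UNIV" by auto
  have "0 < (y $ i * x $ j) / (x $ i * y $ j)" for i j
    using x y by (simp add: pos_vec_def)
  then have "0 < Max ?G" unfolding G by (subst Max_gr_iff) auto
  moreover have "Max ?G \<le> K"
    using x y bound unfolding G by (subst Max_le_iff) (auto simp: pos_vec_def divide_le_eq)
  ultimately show ?thesis unfolding hilbert_dist_def by simp
qed

lemma exists_reachable_final_class:
  fixes f :: "real^'n \<Rightarrow> real^'n"
  obtains j where "(graph_arc f)\<^sup>*\<^sup>* k j" "final_class f {l. (graph_arc f)\<^sup>*\<^sup>* j l}"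
proof -
  define R where "R j = {l. (graph_arc f)\<^sup>*\<^sup>* j l}" for j
  obtain j where j: "j \<in> R k" and least: "\<And>j'. j' \<in> R k \<Longrightarrow> card (R j) \<le> card (R j')"
    using ex_has_least_nat[of "\<lambda>j. j \<in> R k" k "\<lambda>j. card (R j)"] by (auto simp: R_def)
  have R_eq: "R l = R j" if "l \<in> R j" for l
  proof -
    have "R l \<subseteq> R j" "l \<in> R k"
      using that j by (auto simp: R_def)
    then show ?thesis
      using least by (metis card_mono card_subset_eq finite order_antisym)
  qed
  have "final_class f (R j)"
    unfolding final_class_def
  proof (intro conjI ballI allI impI)
    show "R j \<noteq> {}" by (auto simp: R_def)
  next
    fix a b assume "a \<in> R j" "b \<in> R j"
    then show "(graph_arc f)\<^sup>*\<^sup>* a b"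
      using R_eq by (auto simp: R_def)
  next
    fix a b assume "a \<in> R j" "(graph_arc f)\<^sup>*\<^sup>* a b \<and> (graph_arc f)\<^sup>*\<^sup>* b a"
    then show "b \<in> R j" by (auto simp: R_def)
  next
    fix a b assume "a \<in> R j" "graph_arc f a b"
    then show "b \<in> R j" by (auto simp: R_def)
  qed
  with j show ?thesis
    by (intro that) (auto simp: R_def)
qed

locale monotone_homogeneous_map =
  fixes f :: "real^'n \<Rightarrow> real^'n"
  assumes map_pos: "\<And>x. pos_vec x \<Longrightarrow> pos_vec (f x)"
    and order_preserving: "order_preserving_pos f"
    and homogeneous: "homogeneous_pos f"
begin

lemma map_mono: "pos_vec x \<Longrightarrow> pos_vec y \<Longrightarrow> x \<le> y \<Longrightarrow> f x \<le> f y"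
  using order_preserving by (auto simp: order_preserving_pos_def less_eq_vec_def)

lemma map_scaleR: "pos_vec x \<Longrightarrow> 0 < t \<Longrightarrow> f (t *\<^sub>R x) = t *\<^sub>R f x"
  using homogeneous by (simp add: homogeneous_pos_def)

lemma map_scaleR_le: "pos_vec x \<Longrightarrow> pos_vec y \<Longrightarrow> 0 < t \<Longrightarrow> t *\<^sub>R x \<le> y \<Longrightarrow> t *\<^sub>R f x \<le> f y"
  using map_mono[of "t *\<^sub>R x" y] by (simp add: map_scaleR)

lemma map_le_scaleR: "pos_vec x \<Longrightarrow> pos_vec y \<Longrightarrow> 0 < t \<Longrightarrow> y \<le> t *\<^sub>R x \<Longrightarrow> f y \<le> t *\<^sub>R f x"
  using map_mono[of y "t *\<^sub>R x"] by (simp add: map_scaleR)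

lemma map_nth_pos: "pos_vec x \<Longrightarrow> 0 < f x $ i"
  using map_pos by (simp add: pos_vec_def)

lemma cw_radius_le:
  assumes u: "pos_vec u" and sub: "f u \<le> l *\<^sub>R u"
  shows "cw_radius f \<le> l"
proof -
  have "0 \<le> Max (range (\<lambda>i. f x $ i / x $ i))" if "pos_vec x" for x
    using that map_nth_pos[OF that] by (subst Max_ge_iff) (auto simp: pos_vec_def less_imp_le)
  then have "bdd_below ((\<lambda>x. Max (range (\<lambda>i. f x $ i / x $ i))) ` {x. pos_vec x})"
    by (intro bdd_belowI[of _ 0]) auto
  then have "cw_radius f \<le> Max (range (\<lambda>i. f u $ i / u $ i))"
    unfolding cw_radius_def using u by (intro cInf_lower) auto
  also have "\<dots> \<le> l"
    using u sub by (subst Max_le_iff) (auto simp: pos_vec_def less_eq_vec_def divide_le_eq)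
  finally show ?thesis .
qed

lemma cw_radius_ge:
  assumes u: "pos_vec u" and super: "m *\<^sub>R u \<le> f u"
  shows "m \<le> cw_radius f"
  unfolding cw_radius_def
proof (rule cInf_greatest)
  show "(\<lambda>x. Max (range (\<lambda>i. f x $ i / x $ i))) ` {x. pos_vec x} \<noteq> {}"
    using u by auto
  fix s assume "s \<in> (\<lambda>x. Max (range (\<lambda>i. f x $ i / x $ i))) ` {x. pos_vec x}"
  then obtain y where y: "pos_vec y" and s: "s = Max (range (\<lambda>i. f y $ i / y $ i))"
    by auto
  obtain k where k: "\<And>l. y $ k / u $ k \<le> y $ l / u $ l"
    using exists_min_index[of "\<lambda>l. y $ l / u $ l"] by blast
  define c where "c = y $ k / u $ k"
  have "u $ k \<noteq> 0"
    using u unfolding pos_vec_def by (metis less_irrefl)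
  then have c: "0 < c" "c * u $ k = y $ k"
    using u y by (simp_all add: c_def pos_vec_def)
  have "c *\<^sub>R u \<le> y"
    using u k by (auto simp: less_eq_vec_def pos_vec_def c_def mult.commute le_divide_eq)
  then have "c *\<^sub>R f u \<le> f y"
    by (rule map_scaleR_le[OF u y c(1)])
  then have "c * (m * u $ k) \<le> f y $ k"
    using super c(1) by (auto simp: less_eq_vec_def intro: order.trans[OF mult_left_mono])
  then have "m * y $ k \<le> f y $ k"
    using c(2) by (metis mult.left_commute)
  then have "m \<le> f y $ k / y $ k"
    using y by (simp add: pos_vec_def le_divide_eq)
  also have "\<dots> \<le> s"
    unfolding s by (rule Max_ge) auto
  finally show "m \<le> s" .
qed

lemma cw_radius_pos: "0 < cw_radius f"
proof -
  obtain k where k: "\<And>l. f 1 $ k \<le> f 1 $ l"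
    using exists_min_index[of "\<lambda>l. f 1 $ l"] by blast
  have "f 1 $ k *\<^sub>R 1 \<le> f 1"
    using k by (simp add: less_eq_vec_def)
  then have "f 1 $ k \<le> cw_radius f"
    by (rule cw_radius_ge[OF pos_vec_one])
  then show ?thesis
    using map_nth_pos[OF pos_vec_one, of k] by linarith
qed

lemma eigenvalue_eq_cw_radius:
  assumes "pos_vec x" "f x = \<mu> *\<^sub>R x"
  shows "\<mu> = cw_radius f"
  using cw_radius_le[of x \<mu>] cw_radius_ge[of x \<mu>] assms by simp

lemma map_nth_close:
  assumes x: "pos_vec x" and d: "d < 1" and close: "\<And>k. \<bar>y $ k - x $ k\<bar> \<le> d * x $ k"
  shows "(1 - d) * f x $ i \<le> f y $ i" "f y $ i \<le> (1 + d) * f x $ i"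
proof -
  have "0 \<le> d * x $ i" "0 < x $ i"
    using close[of i] x by (linarith, simp add: pos_vec_def)
  then have "0 \<le> d"
    by (simp add: zero_le_mult_iff)
  have lo: "(1 - d) *\<^sub>R x \<le> y" and hi: "y \<le> (1 + d) *\<^sub>R x"
    using close by (auto simp: less_eq_vec_def algebra_simps abs_le_iff)
  have "pos_vec ((1 - d) *\<^sub>R x)"
    using x d by simp
  then have y: "pos_vec y"
    using lo by (auto simp: pos_vec_def less_eq_vec_def intro: less_le_trans)
  show "(1 - d) * f x $ i \<le> f y $ i" "f y $ i \<le> (1 + d) * f x $ i"
    using map_scaleR_le[OF x y _ lo] map_le_scaleR[OF x y _ hi] d \<open>0 \<le> d\<close>
    by (auto simp: less_eq_vec_def)
qed

lemma isCont_map: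
  assumes x: "pos_vec x"
  shows "isCont f x"
proof -
  have xk: "0 < x $ k" for k
    using x by (simp add: pos_vec_def)
  define d where "d y = (\<Sum>k\<in>UNIV. \<bar>y $ k - x $ k\<bar> / x $ k)" for y
  have "isCont d x"
    unfolding d_def by (intro continuous_intros) (metis xk less_irrefl)
  then have d: "(d \<longlongrightarrow> 0) (at x)"
    by (simp add: isCont_def d_def)
  have close: "\<bar>y $ k - x $ k\<bar> \<le> d y * x $ k" for y k
  proof -
    have "\<bar>y $ k - x $ k\<bar> / x $ k \<le> d y"
      unfolding d_def using xk by (intro member_le_sum) (auto intro: divide_nonneg_pos)
    then show ?thesis
      using xk[of k] by (simp add: divide_le_eq)
  qed
  have "eventually (\<lambda>y. d y < 1) (at x)"
    using d by (rule order_tendstoD) simp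
  then have lower: "eventually (\<lambda>y. (1 - d y) * f x $ i \<le> f y $ i) (at x)"
    and upper: "eventually (\<lambda>y. f y $ i \<le> (1 + d y) * f x $ i) (at x)" for i
    by (auto elim!: eventually_mono intro: map_nth_close[OF x _ close])
  show ?thesis
    unfolding isCont_def
  proof (rule vec_tendstoI)
    fix i
    have "((\<lambda>y. (1 - d y) * f x $ i) \<longlongrightarrow> f x $ i) (at x)"
      and "((\<lambda>y. (1 + d y) * f x $ i) \<longlongrightarrow> f x $ i) (at x)"
      using d by (auto intro!: tendsto_eq_intros)
    with lower upper show "((\<lambda>y. f y $ i) \<longlongrightarrow> f x $ i) (at x)"
      by (rule tendsto_sandwich)
  qed
qed

lemma eigenvector_of_shifted_limit:
  assumes x: "pos_vec x" and lim_x: "xs \<longlonglongrightarrow> x" and lim_\<mu>: "\<mu>s \<longlonglongrightarrow> \<mu>"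
    and lim_\<epsilon>: "\<epsilon>s \<longlonglongrightarrow> 0" and eigen: "\<And>k. f (xs k + \<epsilon>s k *\<^sub>R 1) = \<mu>s k *\<^sub>R xs k"
  shows "f x = \<mu> *\<^sub>R x"
proof -
  have "(\<lambda>k. xs k + \<epsilon>s k *\<^sub>R 1) \<longlonglongrightarrow> x + 0 *\<^sub>R 1"
    by (intro tendsto_intros lim_x lim_\<epsilon>)
  then have "(\<lambda>k. f (xs k + \<epsilon>s k *\<^sub>R 1)) \<longlonglongrightarrow> f x"
    using isCont_tendsto_compose[OF isCont_map[OF x]] by simp
  then have "(\<lambda>k. \<mu>s k *\<^sub>R xs k) \<longlonglongrightarrow> f x"
    by (simp add: eigen)
  moreover have "(\<lambda>k. \<mu>s k *\<^sub>R xs k) \<longlonglongrightarrow> \<mu> *\<^sub>R x"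
    by (intro tendsto_scaleR lim_x lim_\<mu>)
  ultimately show ?thesis
    by (rule LIMSEQ_unique)
qed

lemma simplex_shifted_eigenvector_exists:
  assumes \<epsilon>: "0 < \<epsilon>"
  obtains x \<mu> where "0 \<le> x" "(\<Sum>i\<in>UNIV. x $ i) = 1" "0 < \<mu>" "f (x + \<epsilon> *\<^sub>R 1) = \<mu> *\<^sub>R x"
proof -
  have shifted_pos: "pos_vec (x + \<epsilon> *\<^sub>R 1)" if "x \<in> cbox 0 1" for x :: "real^'n"
    using that \<epsilon> by (auto simp: mem_box_cart pos_vec_def add_nonneg_pos)
  have "continuous_on (cbox 0 1) (\<lambda>x. f (x + \<epsilon> *\<^sub>R 1))"
  proof (rule continuous_at_imp_continuous_on, rule ballI)
    fix x :: "real^'n" assume "x \<in> cbox 0 1"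
    have "isCont (\<lambda>x. x + \<epsilon> *\<^sub>R 1) x"
      by (intro continuous_intros)
    then show "isCont (\<lambda>x. f (x + \<epsilon> *\<^sub>R 1)) x"
      using isCont_map[OF shifted_pos[OF \<open>x \<in> cbox 0 1\<close>]] by (rule isCont_o2)
  qed
  then obtain x where x: "x \<in> cbox 0 1"
    and eigen: "f (x + \<epsilon> *\<^sub>R 1) = (\<Sum>i\<in>UNIV. f (x + \<epsilon> *\<^sub>R 1) $ i) *\<^sub>R x"
    using exists_normalised_eigenvector_cbox map_nth_pos[OF shifted_pos] by blast
  define \<mu> where "\<mu> = (\<Sum>i\<in>UNIV. f (x + \<epsilon> *\<^sub>R 1) $ i)"
  have \<mu>: "0 < \<mu>"
    unfolding \<mu>_def using map_nth_pos[OF shifted_pos[OF x]] by (intro sum_pos) auto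
  have eigen\<mu>: "f (x + \<epsilon> *\<^sub>R 1) = \<mu> *\<^sub>R x"
    using eigen by (simp add: \<mu>_def)
  have "\<mu> = \<mu> * (\<Sum>i\<in>UNIV. x $ i)"
    by (subst (1) \<mu>_def) (simp add: eigen\<mu> sum_distrib_left)
  with \<mu> have sum: "(\<Sum>i\<in>UNIV. x $ i) = 1"
    by simp
  have "0 \<le> x"
    using x by (simp add: mem_box_cart less_eq_vec_def)
  from this sum \<mu> eigen\<mu> show ?thesis
    by (rule that)
qed

lemma trunc0_sub_eigenvector:
  assumes \<sigma>: "0 \<le> \<sigma>" "cw_radius (trunc0 f J) < \<sigma>"
  obtains w where "pos_vec w" "\<And>i. i \<in> J \<Longrightarrow> f w $ i \<le> \<sigma> * w $ i"
proof -
  have "{x. pos_vec x} \<noteq> {}"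
    using pos_vec_one by blast
  then have "\<exists>s\<in>(\<lambda>x. Max (range (\<lambda>i. trunc0 f J x $ i / x $ i))) ` {x. pos_vec x}. s < \<sigma>"
    using \<sigma>(2) unfolding cw_radius_def by (intro cInf_lessD) auto
  then obtain z where z: "pos_vec z" and z_ratio: "Max (range (\<lambda>i. trunc0 f J z $ i / z $ i)) < \<sigma>"
    by auto
  have zk: "0 < z $ k" for k
    using z by (simp add: pos_vec_def)
  have "\<exists>y. pos_vec y \<and> (\<forall>k. proj0 J z $ k < y $ k) \<and> f y $ i < \<sigma> * z $ i" if i: "i \<in> J" for i
  proof -
    have "trunc0 f J z $ i / z $ i < \<sigma>"
      using z_ratio by simp
    then have "ext_cone f (proj0 J z) $ i < \<sigma> * z $ i"
      using i zk[of i] by (simp add: trunc0_def proj0_def divide_less_eq)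
    then show ?thesis
      by (rule ext_cone_nth_lessE) blast
  qed
  then obtain y where y: "\<And>i. i \<in> J \<Longrightarrow> pos_vec (y i)"
    and y_gt: "\<And>i k. i \<in> J \<Longrightarrow> proj0 J z $ k < y i $ k"
    and fy: "\<And>i. i \<in> J \<Longrightarrow> f (y i) $ i < \<sigma> * z $ i"
    by metis
  define w where "w = (\<chi> k. Min (insert (z $ k) ((\<lambda>i. y i $ k) ` J)))"
  have w_le: "w \<le> y i" if "i \<in> J" for i
    using that by (auto simp: w_def less_eq_vec_def)
  have "z $ i < y j $ i" if "i \<in> J" "j \<in> J" for i j
    using y_gt[OF that(2), of i] that(1) by (simp add: proj0_def)
  then have w_ge: "z $ i \<le> w $ i" if "i \<in> J" for i
    using that by (auto simp: w_def intro: less_imp_le)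
  have w: "pos_vec w"
    using zk y by (simp add: w_def pos_vec_def)
  show ?thesis
  proof (rule that[OF w])
    fix i assume i: "i \<in> J"
    have "f w $ i \<le> f (y i) $ i"
      using map_mono[OF w y[OF i] w_le[OF i]] by (simp add: less_eq_vec_def)
    also have "\<dots> < \<sigma> * z $ i"
      by (rule fy[OF i])
    also have "\<dots> \<le> \<sigma> * w $ i"
      using w_ge[OF i] \<sigma>(1) by (rule mult_left_mono)
    finally show "f w $ i \<le> \<sigma> * w $ i" by simp
  qed
qed

lemma bdd_above_nth_arc:
  assumes arc: "graph_arc f i j"
    and S: "\<And>u. u \<in> S \<Longrightarrow> pos_vec u \<and> 1 \<le> u \<and> f u \<le> L *\<^sub>R u"
    and bdd: "bdd_above ((\<lambda>u. u $ i) ` S)"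
  shows "bdd_above ((\<lambda>u. u $ j) ` S)"
proof -
  obtain B where B: "\<And>u. u \<in> S \<Longrightarrow> u $ i \<le> B"
    using bdd by (auto simp: bdd_above_def)
  obtain T where T: "\<And>t. T \<le> t \<Longrightarrow> L * B < f (\<chi> k. if k = j then exp t else 1) $ i"
    using arc unfolding graph_arc_def filterlim_at_top_dense eventually_at_top_linorder by blast
  have "u $ j \<le> exp T" if u: "u \<in> S" for u
  proof (rule ccontr)
    assume "\<not> u $ j \<le> exp T"
    moreover have "0 < u $ j"
      using S[OF u] by (simp add: pos_vec_def)
    ultimately have uj: "0 < u $ j" "T \<le> ln (u $ j)"
      by (simp_all add: ln_ge_iff)
    define v :: "real^'n" where "v = (\<chi> k. if k = j then exp (ln (u $ j)) else 1)"
    have "pos_vec v"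
      by (simp add: v_def pos_vec_def)
    moreover have "v \<le> u"
      using S[OF u] uj by (auto simp: v_def less_eq_vec_def)
    ultimately have "f v $ i \<le> f u $ i"
      using S[OF u] map_mono by (auto simp: less_eq_vec_def)
    also have "\<dots> \<le> L * u $ i"
      using S[OF u] by (simp add: less_eq_vec_def)
    finally have fv: "f v $ i \<le> L * u $ i" .
    have "0 < u $ i"
      using S[OF u] by (simp add: pos_vec_def)
    with fv map_nth_pos[OF \<open>pos_vec v\<close>, of i] have "0 \<le> L"
      by (metis less_le_trans zero_less_mult_pos2 less_imp_le)
    then have "f v $ i \<le> L * B"
      using fv B[OF u] by (meson mult_left_mono order.trans)
    then show False
      using T[OF uj(2)] by (simp add: v_def)
  qed
  then show ?thesis
    by (auto simp: bdd_above_def)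
qed

lemma bdd_above_nth_path:
  assumes "(graph_arc f)\<^sup>*\<^sup>* i j"
    and "\<And>u. u \<in> S \<Longrightarrow> pos_vec u \<and> 1 \<le> u \<and> f u \<le> L *\<^sub>R u"
    and "bdd_above ((\<lambda>u. u $ i) ` S)"
  shows "bdd_above ((\<lambda>u. u $ j) ` S)"
  using assms(1)
proof induction
  case (step j k)
  from assms(2) show ?case
    by (rule bdd_above_nth_arc[OF step.hyps(2) _ step.IH])
qed (use assms(3) in simp)

text \<open>With \<open>\<epsilon> = 0\<close> this describes eigenvectors; for \<open>\<epsilon> > 0\<close> and \<open>x = u - \<epsilon> *\<^sub>R 1\<close> the
  equation reads \<open>f (x + \<epsilon> *\<^sub>R 1) = \<mu> *\<^sub>R x\<close>, the form in which Brouwer's theorem solves it.\<close>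

definition perturbed_eigenvector :: "real \<Rightarrow> real \<Rightarrow> real \<Rightarrow> real^'n \<Rightarrow> bool" where
  "perturbed_eigenvector L \<epsilon> \<mu> u \<longleftrightarrow>
     pos_vec u \<and> 0 \<le> \<epsilon> \<and> cw_radius f \<le> \<mu> \<and> \<mu> \<le> L \<and> f u = \<mu> *\<^sub>R (u - \<epsilon> *\<^sub>R 1)"

lemma perturbed_eigenvector_sub_eigenvector:
  assumes "perturbed_eigenvector L \<epsilon> \<mu> u"
  shows "f u \<le> L *\<^sub>R u"
proof (unfold less_eq_vec_def, rule allI)
  fix i
  have u: "0 < u $ i" and \<epsilon>: "0 \<le> \<epsilon>" and \<mu>: "0 \<le> \<mu>" "\<mu> \<le> L"
    using assms cw_radius_pos by (auto simp: perturbed_eigenvector_def pos_vec_def)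
  have "f u $ i = \<mu> * (u $ i - \<epsilon>)"
    using assms by (simp add: perturbed_eigenvector_def)
  also have "\<dots> \<le> \<mu> * u $ i"
    using \<mu>(1) \<epsilon> by (simp add: mult_left_mono)
  also have "\<dots> \<le> L * u $ i"
    using \<mu>(2) u by (simp add: mult_right_mono)
  finally show "f u $ i \<le> (L *\<^sub>R u) $ i"
    by simp
qed

lemma perturbed_eigenvector_of_simplex:
  assumes x: "0 \<le> x" "(\<Sum>i\<in>UNIV. x $ i) = 1" and \<epsilon>: "0 < \<epsilon>" "\<epsilon> \<le> 1"
    and \<mu>: "0 < \<mu>" and eigen: "f (x + \<epsilon> *\<^sub>R 1) = \<mu> *\<^sub>R x"
  shows "perturbed_eigenvector (2 * (\<Sum>i\<in>UNIV. f 1 $ i)) \<epsilon> \<mu> (x + \<epsilon> *\<^sub>R 1)"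
proof -
  let ?u = "x + \<epsilon> *\<^sub>R 1"
  have u: "pos_vec ?u"
    using x(1) \<epsilon>(1) by (auto simp: pos_vec_def less_eq_vec_def add_nonneg_pos)
  have "f ?u \<le> \<mu> *\<^sub>R ?u"
    using \<epsilon>(1) \<mu> by (simp add: eigen less_eq_vec_def)
  then have lower: "cw_radius f \<le> \<mu>"
    by (rule cw_radius_le[OF u])
  have u_le: "?u \<le> 2 *\<^sub>R 1"
    unfolding less_eq_vec_def
  proof
    fix i
    show "?u $ i \<le> (2 *\<^sub>R 1) $ i"
      using simplex_nth_le_one[OF x, of i] \<epsilon>(2) by simp
  qed
  have "f ?u \<le> 2 *\<^sub>R f 1"
    using map_le_scaleR[OF pos_vec_one u _ u_le] by simp
  then have "(\<Sum>i\<in>UNIV. f ?u $ i) \<le> (\<Sum>i\<in>UNIV. 2 * f 1 $ i)"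
    by (intro sum_mono) (simp add: less_eq_vec_def)
  moreover have "(\<Sum>i\<in>UNIV. f ?u $ i) = \<mu>"
    using x(2) by (simp add: eigen sum_distrib_left[symmetric])
  ultimately have "\<mu> \<le> 2 * (\<Sum>i\<in>UNIV. f 1 $ i)"
    by (simp add: sum_distrib_left)
  with u lower \<epsilon>(1) show ?thesis
    by (simp add: perturbed_eigenvector_def eigen)
qed

lemma perturbed_eigenvector_max_ratio_small:
  assumes pe: "perturbed_eigenvector L \<epsilon> \<mu> u" and w: "pos_vec w"
    and k: "\<And>l. u $ l / w $ l \<le> u $ k / w $ k"
    and sub: "f w $ k \<le> \<sigma> * w $ k" and \<sigma>: "\<sigma> < cw_radius f"
  shows "u $ k \<le> L * \<epsilon> / (cw_radius f - \<sigma>)"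
proof -
  have u: "pos_vec u" and \<epsilon>: "0 \<le> \<epsilon>" and \<mu>: "cw_radius f \<le> \<mu>" "\<mu> \<le> L"
    and eigen: "f u = \<mu> *\<^sub>R (u - \<epsilon> *\<^sub>R 1)"
    using pe by (simp_all add: perturbed_eigenvector_def)
  define t where "t = u $ k / w $ k"
  have "0 < w $ k" "0 < u $ k"
    using u w by (simp_all add: pos_vec_def)
  then have t: "0 < t" "t * w $ k = u $ k"
    by (simp_all add: t_def)
  have "u \<le> t *\<^sub>R w"
    using k w by (simp add: t_def less_eq_vec_def divide_le_eq pos_vec_def)
  then have "\<mu> * (u $ k - \<epsilon>) \<le> t * f w $ k"
    using map_le_scaleR[OF w u t(1)] by (simp add: eigen less_eq_vec_def)
  also have "\<dots> \<le> t * (\<sigma> * w $ k)"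
    using sub t(1) by simp
  also have "\<dots> = \<sigma> * u $ k"
    by (metis t(2) mult.left_commute)
  finally have "(\<mu> - \<sigma>) * u $ k \<le> \<mu> * \<epsilon>"
    by (simp add: algebra_simps)
  moreover have "(cw_radius f - \<sigma>) * u $ k \<le> (\<mu> - \<sigma>) * u $ k"
    using \<mu>(1) u by (simp add: pos_vec_def)
  moreover have "\<mu> * \<epsilon> \<le> L * \<epsilon>"
    using \<mu>(2) \<epsilon> by (rule mult_right_mono)
  ultimately show ?thesis
    using \<sigma> by (simp add: le_divide_eq mult.commute)
qed

end

locale dominant_final_class = monotone_homogeneous_map f for f :: "real^'n \<Rightarrow> real^'n" +
  fixes C :: "'n set"
  assumes final: "final_class f C"
    and final_unique: "\<And>D. final_class f D \<Longrightarrow> D = C"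
    and radius_gap: "cw_radius (trunc0 f (UNIV - C)) < cw_radius f"
begin

lemma reaches_final_class:
  assumes "c \<in> C"
  shows "(graph_arc f)\<^sup>*\<^sup>* k c"
proof -
  obtain j where kj: "(graph_arc f)\<^sup>*\<^sup>* k j" and "final_class f {l. (graph_arc f)\<^sup>*\<^sup>* j l}"
    by (rule exists_reachable_final_class)
  from this(2) have "{l. (graph_arc f)\<^sup>*\<^sup>* j l} = C"
    by (rule final_unique)
  then have "j \<in> C"
    by auto
  then have "(graph_arc f)\<^sup>*\<^sup>* j c"
    using final assms unfolding final_class_def by blast
  with kj show ?thesis
    by (rule rtranclp_trans)
qed

lemma sub_eigenvector_final_class_bound:
  obtains K where "\<And>u c k. pos_vec u \<Longrightarrow> f u \<le> L *\<^sub>R u \<Longrightarrow> c \<in> C \<Longrightarrow> u $ c \<le> K * u $ k"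
proof -
  define S where "S k = {u. pos_vec u \<and> 1 \<le> u \<and> f u \<le> L *\<^sub>R u \<and> u $ k \<le> 1}" for k
  have "bdd_above ((\<lambda>u. u $ c) ` S k)" if "c \<in> C" for c k
    by (rule bdd_above_nth_path[OF reaches_final_class[OF that]])
      (auto simp: S_def intro: bdd_aboveI[of _ 1])
  then have "bdd_above (\<Union>c\<in>C. \<Union>k. (\<lambda>u. u $ c) ` S k)"
    by simp
  then obtain K where "\<forall>x\<in>(\<Union>c\<in>C. \<Union>k. (\<lambda>u. u $ c) ` S k). x \<le> K"
    by (auto simp: bdd_above_def)
  then have K: "u $ c \<le> K" if "c \<in> C" "u \<in> S k" for u c k
    using that by blast
  show thesis
  proof (rule that)
    fix u c k assume u: "pos_vec u" and sub: "f u \<le> L *\<^sub>R u" and c: "c \<in> C"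
    obtain k0 where k0: "\<And>l. u $ k0 \<le> u $ l"
      using exists_min_index[of "\<lambda>l. u $ l"] by blast
    have uk0: "0 < u $ k0"
      using u by (simp add: pos_vec_def)
    define v where "v = inverse (u $ k0) *\<^sub>R u"
    have "1 \<le> v"
      using k0 uk0 by (simp add: v_def less_eq_vec_def field_simps)
    moreover have "f v \<le> L *\<^sub>R v"
      using sub uk0 by (simp add: v_def map_scaleR[OF u] less_eq_vec_def field_simps)
    ultimately have "v \<in> S k0"
      using u uk0 by (simp add: S_def v_def)
    then have vc: "v $ c \<le> K"
      by (rule K[OF c])
    have "0 < v $ c"
      using u uk0 by (simp add: v_def pos_vec_def)
    with vc have "0 \<le> K"
      by linarith
    have "u $ c \<le> K * u $ k0"
      using vc uk0 by (simp add: v_def field_simps)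
    also have "\<dots> \<le> K * u $ k"
      using k0[of k] \<open>0 \<le> K\<close> by (rule mult_left_mono)
    finally show "u $ c \<le> K * u $ k" .
  qed
qed

lemma final_class_nonempty: "C \<noteq> {}"
  using final unfolding final_class_def by (rule conjunct1)

lemma exists_sub_eigenvector_off_final_class:
  obtains \<sigma> w where "\<sigma> < cw_radius f" "pos_vec w" "\<And>i. i \<notin> C \<Longrightarrow> f w $ i \<le> \<sigma> * w $ i"
proof -
  have "max 0 (cw_radius (trunc0 f (UNIV - C))) < cw_radius f"
    using radius_gap cw_radius_pos by simp
  then obtain \<sigma> where "max 0 (cw_radius (trunc0 f (UNIV - C))) < \<sigma>" "\<sigma> < cw_radius f"
    using dense by blast
  moreover from this(1) obtain w where "pos_vec w" "\<And>i. i \<in> UNIV - C \<Longrightarrow> f w $ i \<le> \<sigma> * w $ i"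
    using trunc0_sub_eigenvector[of \<sigma> "UNIV - C"] by auto
  ultimately show ?thesis
    using that by blast
qed

lemma perturbed_eigenvector_off_final_class:
  obtains A W where
    "\<And>u \<mu> \<epsilon>. perturbed_eigenvector L \<epsilon> \<mu> u \<Longrightarrow> \<exists>c\<in>C. \<forall>l. u $ l \<le> A * \<epsilon> + W * u $ c"
    "0 \<le> W"
proof -
  obtain \<sigma> w where \<sigma>: "\<sigma> < cw_radius f" and w: "pos_vec w"
    and w_sub: "\<And>i. i \<notin> C \<Longrightarrow> f w $ i \<le> \<sigma> * w $ i"
    using exists_sub_eigenvector_off_final_class by blast
  obtain a where a: "\<And>l. w $ l \<le> w $ a"
    using exists_max_index[of "\<lambda>l. w $ l"] by blast
  obtain b where b: "\<And>l. w $ b \<le> w $ l"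
    using exists_min_index[of "\<lambda>l. w $ l"] by blast
  define W where "W = w $ a / w $ b"
  define A where "A = W * L / (cw_radius f - \<sigma>)"
  have W: "0 \<le> W"
    using w by (simp add: W_def pos_vec_def less_imp_le)
  show thesis
  proof (rule that[OF _ W])
    fix u \<mu> \<epsilon>
    assume pe: "perturbed_eigenvector L \<epsilon> \<mu> u"
    then have u: "pos_vec u" and "0 \<le> \<epsilon>" "cw_radius f \<le> L"
      by (auto simp: perturbed_eigenvector_def)
    then have "0 \<le> A * \<epsilon>"
      using \<sigma> W cw_radius_pos by (simp add: A_def)
    obtain k where k: "\<And>l. u $ l / w $ l \<le> u $ k / w $ k"
      using exists_max_index[of "\<lambda>l. u $ l / w $ l"] by blast
    have dominated: "u $ l \<le> W * u $ k" for l
      unfolding W_def by (rule nth_le_max_ratio[OF u w k a b])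
    show "\<exists>c\<in>C. \<forall>l. u $ l \<le> A * \<epsilon> + W * u $ c"
    proof (cases "k \<in> C")
      case True
      have "u $ l \<le> A * \<epsilon> + W * u $ k" for l
        using dominated[of l] \<open>0 \<le> A * \<epsilon>\<close> by linarith
      with True show ?thesis
        by blast
    next
      case False
      \<comment> \<open>off \<open>C\<close>, the entry \<open>u $ k\<close> that dominates \<open>u\<close> is of order \<open>\<epsilon>\<close>\<close>
      have "u $ k \<le> L * \<epsilon> / (cw_radius f - \<sigma>)"
        using perturbed_eigenvector_max_ratio_small[OF pe w k w_sub[OF False] \<sigma>] .
      then have "W * u $ k \<le> W * (L * \<epsilon> / (cw_radius f - \<sigma>))"
        using W by (rule mult_left_mono)
      also have "\<dots> = A * \<epsilon>"
        by (simp add: A_def)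
      finally have small: "W * u $ k \<le> A * \<epsilon>" .
      obtain c where c: "c \<in> C"
        using final_class_nonempty by blast
      have "0 < u $ c"
        using u by (simp add: pos_vec_def)
      with W have "0 \<le> W * u $ c"
        by simp
      then have "u $ l \<le> A * \<epsilon> + W * u $ c" for l
        using dominated[of l] small by linarith
      with c show ?thesis
        by blast
    qed
  qed
qed

lemma perturbed_eigenvector_ratio_bound:
  obtains A B where
    "\<And>u \<mu> \<epsilon> l k. perturbed_eigenvector L \<epsilon> \<mu> u \<Longrightarrow> A * \<epsilon> \<le> u $ l \<Longrightarrow> u $ l \<le> B * u $ k"
proof -
  obtain A W where off_final:
      "\<And>u \<mu> \<epsilon>. perturbed_eigenvector L \<epsilon> \<mu> u \<Longrightarrow> \<exists>c\<in>C. \<forall>l. u $ l \<le> A * \<epsilon> + W * u $ c"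
    and W: "0 \<le> W"
    using perturbed_eigenvector_off_final_class[where L = L] by blast
  obtain K where K: "\<And>u c k. pos_vec u \<Longrightarrow> f u \<le> L *\<^sub>R u \<Longrightarrow> c \<in> C \<Longrightarrow> u $ c \<le> K * u $ k"
    using sub_eigenvector_final_class_bound[where L = L] by blast
  show thesis
  proof (rule that[of "2 * A" "2 * W * K"])
    fix u \<mu> \<epsilon> l k
    assume pe: "perturbed_eigenvector L \<epsilon> \<mu> u" and large: "2 * A * \<epsilon> \<le> u $ l"
    obtain c where c: "c \<in> C" "\<And>l. u $ l \<le> A * \<epsilon> + W * u $ c"
      using off_final[OF pe] by blast
    have "u $ l \<le> 2 * W * u $ c"
      using c(2)[of l] large by linarith
    also have "\<dots> \<le> 2 * W * (K * u $ k)"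
      using pe W K[OF _ perturbed_eigenvector_sub_eigenvector[OF pe] c(1)]
      by (intro mult_left_mono) (auto simp: perturbed_eigenvector_def)
    finally show "u $ l \<le> 2 * W * K * u $ k"
      by (simp add: mult.assoc)
  qed
qed

lemma eigenvector_ratio_bound:
  obtains B where "\<And>x l k. x \<in> eigenspace_pos f \<Longrightarrow> x $ l \<le> B * x $ k"
proof -
  obtain A B where AB: "\<And>u \<mu> \<epsilon> l k. perturbed_eigenvector (cw_radius f) \<epsilon> \<mu> u \<Longrightarrow>
      A * \<epsilon> \<le> u $ l \<Longrightarrow> u $ l \<le> B * u $ k"
    using perturbed_eigenvector_ratio_bound[where L = "cw_radius f"] by blast
  show thesis
  proof (rule that)
    fix x l k assume "x \<in> eigenspace_pos f"
    then obtain \<mu> where x: "pos_vec x" and eigen: "f x = \<mu> *\<^sub>R x"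
      by (auto simp: eigenspace_pos_def)
    then have "perturbed_eigenvector (cw_radius f) 0 (cw_radius f) x"
      using eigenvalue_eq_cw_radius by (simp add: perturbed_eigenvector_def)
    moreover have "A * 0 \<le> x $ l"
      using x by (simp add: pos_vec_def less_imp_le)
    ultimately show "x $ l \<le> B * x $ k"
      by (rule AB)
  qed
qed

lemma eigenspace_hilbert_bounded:
  "\<exists>M. \<forall>x\<in>eigenspace_pos f. \<forall>y\<in>eigenspace_pos f. hilbert_dist x y \<le> M"
proof -
  obtain B where B: "\<And>x l k. x \<in> eigenspace_pos f \<Longrightarrow> x $ l \<le> B * x $ k"
    using eigenvector_ratio_bound by blast
  have "hilbert_dist x y \<le> ln (B * B)"
    if x: "x \<in> eigenspace_pos f" and y: "y \<in> eigenspace_pos f" for x y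
  proof (rule hilbert_dist_le)
    show "pos_vec x" "pos_vec y"
      using x y by (simp_all add: eigenspace_pos_def)
    then show "y $ i * x $ j \<le> B * B * (x $ i * y $ j)" for i j
    proof -
      have "0 \<le> B * y $ j"
        using B[OF y, of i j] \<open>pos_vec y\<close> by (simp add: pos_vec_def less_imp_le order.trans[rotated])
      then have "y $ i * x $ j \<le> (B * y $ j) * (B * x $ i)"
        using B[OF y, of i j] B[OF x, of j i] \<open>pos_vec x\<close>
        by (intro mult_mono) (auto simp: pos_vec_def less_imp_le)
      then show ?thesis
        by (simp add: mult_ac)
    qed
  qed
  then show ?thesis
    by blast
qed

lemma perturbed_eigenvector_uniformly_positive:
  obtains \<epsilon>\<^sub>0 c where "0 < \<epsilon>\<^sub>0" "0 < c"
    "\<And>u \<mu> \<epsilon> k. perturbed_eigenvector L \<epsilon> \<mu> u \<Longrightarrow> \<epsilon> \<le> \<epsilon>\<^sub>0 \<Longrightarrow> 1 \<le> (\<Sum>i\<in>UNIV. u $ i) \<Longrightarrow>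
      c \<le> u $ k"
proof -
  obtain A B where AB: "\<And>u \<mu> \<epsilon> l k. perturbed_eigenvector L \<epsilon> \<mu> u \<Longrightarrow>
      A * \<epsilon> \<le> u $ l \<Longrightarrow> u $ l \<le> B * u $ k"
    using perturbed_eigenvector_ratio_bound[where L = L] by blast
  define n where "n = real CARD('n)"
  have n: "1 \<le> n"
    by (simp add: n_def Suc_le_eq)
  have pos: "0 < n * (\<bar>A\<bar> + 1)" "0 < n * max 1 B"
    using n by (simp_all add: add_pos_nonneg)
  show thesis
  proof (rule that[of "1 / (n * (\<bar>A\<bar> + 1))" "1 / (n * max 1 B)"])
    show "0 < 1 / (n * (\<bar>A\<bar> + 1))" "0 < 1 / (n * max 1 B)"
      using pos by simp_all
    fix u \<mu> \<epsilon> k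
    assume pe: "perturbed_eigenvector L \<epsilon> \<mu> u" and \<epsilon>: "\<epsilon> \<le> 1 / (n * (\<bar>A\<bar> + 1))"
      and sum: "1 \<le> (\<Sum>i\<in>UNIV. u $ i)"
    have u: "pos_vec u" and "0 \<le> \<epsilon>"
      using pe by (simp_all add: perturbed_eigenvector_def)
    obtain l where l: "\<And>i. u $ i \<le> u $ l"
      using exists_max_index[of "\<lambda>i. u $ i"] by blast
    have n_ul: "1 \<le> n * u $ l"
      using sum sum_bounded_above[of UNIV "\<lambda>i. u $ i" "u $ l"] l by (simp add: n_def)
    have "A * \<epsilon> \<le> (\<bar>A\<bar> + 1) * \<epsilon>"
      using \<open>0 \<le> \<epsilon>\<close> by (intro mult_right_mono) auto
    also have "\<dots> \<le> (\<bar>A\<bar> + 1) * (1 / (n * (\<bar>A\<bar> + 1)))"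
      using \<epsilon> by (intro mult_left_mono) auto
    also have "\<dots> = 1 / n"
      by (simp add: add_pos_nonneg)
    also have "\<dots> \<le> u $ l"
      using n_ul n by (simp add: divide_le_eq mult.commute)
    finally have "u $ l \<le> B * u $ k"
      by (rule AB[OF pe])
    also have "\<dots> \<le> max 1 B * u $ k"
      using u by (intro mult_right_mono) (auto simp: pos_vec_def less_imp_le)
    finally have "n * u $ l \<le> n * (max 1 B * u $ k)"
      using n by simp
    then have "1 \<le> n * (max 1 B * u $ k)"
      using n_ul by linarith
    then show "1 / (n * max 1 B) \<le> u $ k"
      using pos by (simp add: divide_le_eq mult_ac)
  qed
qed

lemma small_perturbed_eigenvectors_in_compact:
  obtains \<delta> \<epsilon>\<^sub>0 L where "0 < \<delta>" "0 < \<epsilon>\<^sub>0"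
    "\<And>\<epsilon>. 0 < \<epsilon> \<Longrightarrow> \<epsilon> \<le> \<epsilon>\<^sub>0 \<Longrightarrow>
      \<exists>x \<mu>. x \<in> cbox (\<delta> *\<^sub>R 1) 1 \<and> \<mu> \<in> {cw_radius f..L} \<and> f (x + \<epsilon> *\<^sub>R 1) = \<mu> *\<^sub>R x"
proof -
  define L where "L = 2 * (\<Sum>i\<in>UNIV. f 1 $ i)"
  obtain \<epsilon>\<^sub>1 c where \<epsilon>\<^sub>1: "0 < \<epsilon>\<^sub>1" and c: "0 < c" and lower: "\<And>u \<mu> \<epsilon> k.
      perturbed_eigenvector L \<epsilon> \<mu> u \<Longrightarrow> \<epsilon> \<le> \<epsilon>\<^sub>1 \<Longrightarrow> 1 \<le> (\<Sum>i\<in>UNIV. u $ i) \<Longrightarrow> c \<le> u $ k"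
    using perturbed_eigenvector_uniformly_positive[where L = L] by blast
  show thesis
  proof (rule that[of "c / 2" "min 1 (min \<epsilon>\<^sub>1 (c / 2))" L])
    show "0 < c / 2" "0 < min 1 (min \<epsilon>\<^sub>1 (c / 2))"
      using c \<epsilon>\<^sub>1 by simp_all
    fix \<epsilon> assume \<epsilon>: "0 < \<epsilon>" "\<epsilon> \<le> min 1 (min \<epsilon>\<^sub>1 (c / 2))"
    obtain x \<mu> where x: "0 \<le> x" "(\<Sum>i\<in>UNIV. x $ i) = 1" and \<mu>: "0 < \<mu>"
      and eigen: "f (x + \<epsilon> *\<^sub>R 1) = \<mu> *\<^sub>R x"
      using simplex_shifted_eigenvector_exists[OF \<epsilon>(1)] by blast
    have pe: "perturbed_eigenvector L \<epsilon> \<mu> (x + \<epsilon> *\<^sub>R 1)"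
      unfolding L_def using \<epsilon> by (intro perturbed_eigenvector_of_simplex[OF x \<epsilon>(1) _ \<mu> eigen]) simp
    have "1 \<le> (\<Sum>i\<in>UNIV. (x + \<epsilon> *\<^sub>R 1) $ i)"
      using x(2) \<epsilon>(1) by (simp add: sum.distrib)
    then have lower_x: "c \<le> x $ k + \<epsilon>" for k
      using lower[OF pe] \<epsilon> by simp
    have "\<epsilon> \<le> c / 2"
      using \<epsilon>(2) by simp
    then have "c / 2 \<le> x $ k" for k
      using lower_x[of k] by linarith
    moreover have "x $ k \<le> 1" for k
      using x by (rule simplex_nth_le_one)
    moreover have "\<mu> \<in> {cw_radius f..L}"
      using pe by (simp add: perturbed_eigenvector_def)
    ultimately show "\<exists>x \<mu>. x \<in> cbox ((c / 2) *\<^sub>R 1) 1 \<and> \<mu> \<in> {cw_radius f..L} \<and>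
        f (x + \<epsilon> *\<^sub>R 1) = \<mu> *\<^sub>R x"
      using eigen by (intro exI[of _ x] exI[of _ \<mu>]) (simp add: mem_box_cart)
  qed
qed

lemma eigenvector_exists: "eigenspace_pos f \<noteq> {}"
proof -
  obtain \<delta> \<epsilon>\<^sub>0 L where \<delta>: "0 < \<delta>" and \<epsilon>\<^sub>0: "0 < \<epsilon>\<^sub>0" and approx: "\<And>\<epsilon>. 0 < \<epsilon> \<Longrightarrow> \<epsilon> \<le> \<epsilon>\<^sub>0 \<Longrightarrow>
      \<exists>x \<mu>. x \<in> cbox (\<delta> *\<^sub>R 1) 1 \<and> \<mu> \<in> {cw_radius f..L} \<and> f (x + \<epsilon> *\<^sub>R 1) = \<mu> *\<^sub>R x"
    using small_perturbed_eigenvectors_in_compact by blast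
  define K where "K = cbox (\<delta> *\<^sub>R 1) (1::real^'n) \<times> {cw_radius f..L}"
  define \<epsilon> where "\<epsilon> k = \<epsilon>\<^sub>0 * inverse (real (Suc k))" for k
  have "0 < \<epsilon> k" "\<epsilon> k \<le> \<epsilon>\<^sub>0" for k
    using \<epsilon>\<^sub>0 by (simp_all add: \<epsilon>_def field_simps)
  then have "\<exists>p\<in>K. f (fst p + \<epsilon> k *\<^sub>R 1) = snd p *\<^sub>R fst p" for k
    using approx unfolding K_def by fastforce
  then obtain P where P: "\<And>k. P k \<in> K" "\<And>k. f (fst (P k) + \<epsilon> k *\<^sub>R 1) = snd (P k) *\<^sub>R fst (P k)"
    by metis
  have "compact K"
    unfolding K_def by (intro compact_Times compact_cbox compact_Icc)
  then obtain p r where p: "p \<in> K" and r: "strict_mono r" and lim: "(P \<circ> r) \<longlonglongrightarrow> p"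
    using P(1) by (blast elim: seq_compactE[OF compact_imp_seq_compact])
  obtain x \<mu> where p_eq: "p = (x, \<mu>)"
    by (rule prod.exhaust)
  have x: "pos_vec x"
    using p \<delta> by (auto simp: p_eq K_def mem_box_cart pos_vec_def intro: less_le_trans)
  have "\<epsilon> \<longlonglongrightarrow> \<epsilon>\<^sub>0 * 0"
    unfolding \<epsilon>_def by (intro tendsto_mult tendsto_const LIMSEQ_inverse_real_of_nat)
  then have "(\<lambda>k. \<epsilon> (r k)) \<longlonglongrightarrow> 0"
    using LIMSEQ_subseq_LIMSEQ[OF _ r] by (simp add: o_def)
  moreover have "(\<lambda>k. fst (P (r k))) \<longlonglongrightarrow> x" "(\<lambda>k. snd (P (r k))) \<longlonglongrightarrow> \<mu>"
    using tendsto_fst[OF lim] tendsto_snd[OF lim] by (simp_all add: p_eq o_def)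
  ultimately have "f x = \<mu> *\<^sub>R x"
    using P(2) by (intro eigenvector_of_shifted_limit[OF x]) auto
  with x show ?thesis
    unfolding eigenspace_pos_def by blast
qed

end

theorem theorem3p11:
  fixes f :: "real^'n \<Rightarrow> real^'n" and C :: "'n set"
  assumes "\<forall>x. pos_vec x \<longrightarrow> pos_vec (f x)"
    and "order_preserving_pos f"
    and "homogeneous_pos f"
    and "final_class f C"
    and "\<forall>D. final_class f D \<longrightarrow> D = C"
    and "cw_radius (trunc0 f (UNIV - C)) < cw_radius f"
  shows "eigenspace_pos f \<noteq> {} \<and>
         (\<exists>M. \<forall>x\<in>eigenspace_pos f. \<forall>y\<in>eigenspace_pos f. hilbert_dist x y \<le> M)"
proof -
  interpret dominant_final_class f C
  proof
    show "\<And>x. pos_vec x \<Longrightarrow> pos_vec (f x)" "\<And>D. final_class f D \<Longrightarrow> D = C"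
      using assms(1,5) by blast+
  qed (fact assms)+
  show ?thesis
    using eigenvector_exists eigenspace_hilbert_bounded by blast
qed

end
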